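(* Let $(X,d)$ be a locally compact noncompact Polish space with compatible metric $d$, $A$ a nonzero C*-algebra, and $Y_n\subseteq X$ ($n\in\mathbb N$) infinite, compact, pairwise disjoint sets such that no compact subset of $X$ meets infinitely many $Y_n$. Let $\phi_n\in\mathrm{Homeo}_\partial(Y_n)$ for each $n$, let $\tilde\psi\in\mathrm{Aut}(Q(X,A))$ be canonically determined by $\{\phi_n\}$, and let $f\in\mathbb N^{\mathbb N}$. If $r(\phi_n)\ge n/f(n)$ for infinitely many $n$, then there is $c\in C_f$ with $\tilde\psi(c)\neq c$.
   Context: For closed $Y\subseteq X$, $\partial_X Y=Y\cap\overline{X\setminus Y}$ and $\mathrm{Homeo}_\partial(Y)$ is the group of homeomorphisms of $Y$ fixing every point of $\partial_XY$. Given $\phi_n\in\mathrm{Homeo}_\partial(Y_n)$ for all $n$, let $\tilde\phi$ be the homeomorphism of $X$ equal to $\phi_n$ on $Y_n$ and to the identity off $\bigcup_n Y_n$; then $\psi(g)=g\circ\tilde\phi$ defines an automorphism of $C_b(X,A)$ preserving $C_0(X,A)$, and the induced automorphism $\tilde\psi$ of $Q(X,A)=C_b(X,A)/C_0(X,A)$ is said to be canonically determined by $\{\phi_n\}$. The radius of $\phi_n$ is $r(\phi_n)=\sup_{x\in Y_n}d(x,\phi_n(x))$. $\mathbb N^{\mathbb N}$ is the set of $f\colon\mathbb N\to\mathbb N$ with all values positive; $\pi\colon C_b(X,A)\to Q(X,A)$ is the quotient map; $D_f=\{g\in C_b(X,A)\mid\forall\epsilon>0\ \exists n_0\ \forall n\ge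 n_0\ \forall x,y\in Y_n\ (d(x,y)<1/f(n)\Rightarrow\|g(x)-g(y)\|<\epsilon)\}$ and $C_f=\pi(D_f)$. *)

theory Defs
  imports "HOL-Analysis.Analysis"
begin

text \<open>The complex structure is given on top of the real Banach algebra structure
by the operator cmul_i (multiplication by the imaginary unit); complex scalar
multiplication by a + b i is then scaleR a x + scaleR b (cmul_i x).\<close>

class cstar_algebra = real_normed_algebra + banach +
  fixes cmul_i :: "'a \<Rightarrow> 'a"
    and cstar :: "'a \<Rightarrow> 'a"
  assumes cmul_i_add: "cmul_i (x + y) = cmul_i x + cmul_i y"
    and cmul_i_scaleR: "cmul_i (scaleR r x) = scaleR r (cmul_i x)"
    and cmul_i_cmul_i: "cmul_i (cmul_i x) = - x"
    and cmul_i_mult_left: "cmul_i (x * y) = cmul_i x * y"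
    and cmul_i_mult_right: "cmul_i (x * y) = x * cmul_i y"
    and norm_complex_scale:
      "norm (scaleR a x + scaleR b (cmul_i x)) = cmod (Complex a b) * norm x"
    and cstar_cstar: "cstar (cstar x) = x"
    and cstar_add: "cstar (x + y) = cstar x + cstar y"
    and cstar_scaleR: "cstar (scaleR r x) = scaleR r (cstar x)"
    and cstar_cmul_i: "cstar (cmul_i x) = - cmul_i (cstar x)"
    and cstar_mult: "cstar (x * y) = cstar y * cstar x"
    and cstar_identity: "norm (cstar x * x) = (norm x)\<^sup>2"

definition Cb :: "('b::topological_space \<Rightarrow> 'a::real_normed_vector) set" where
  "Cb = {g. continuous_on UNIV g \<and> bounded (range g)}"

definition C0 :: "('b::topological_space \<Rightarrow> 'a::real_normed_vector) set" where
  "C0 = {g. continuous_on UNIV g \<and>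
            (\<forall>\<epsilon>>0. \<exists>K. compact K \<and> (\<forall>x. x \<notin> K \<longrightarrow> norm (g x) < \<epsilon>))}"

definition quot_map :: "('b::topological_space \<Rightarrow> 'a::real_normed_vector) \<Rightarrow> ('b \<Rightarrow> 'a) set" where
  "quot_map g = {h \<in> Cb. h - g \<in> C0}"

definition Q :: "('b::topological_space \<Rightarrow> 'a::real_normed_vector) set set" where
  "Q = quot_map ` Cb"

definition boundary_in :: "'b::topological_space set \<Rightarrow> 'b set" where
  "boundary_in Y = Y \<inter> closure (UNIV - Y)"

definition homeo_bd :: "'b::topological_space set \<Rightarrow> ('b \<Rightarrow> 'b) \<Rightarrow> bool" where
  "homeo_bd Y \<phi> \<longleftrightarrow> (\<exists>\<gamma>. homeomorphism Y Y \<phi> \<gamma>) \<and> (\<forall>x \<in> boundary_in Y. \<phi> x = x)"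

definition phi_tilde :: "(nat \<Rightarrow> 'b set) \<Rightarrow> (nat \<Rightarrow> 'b \<Rightarrow> 'b) \<Rightarrow> 'b \<Rightarrow> 'b" where
  "phi_tilde Y \<phi> x = (if \<exists>n. x \<in> Y n then \<phi> (SOME n. x \<in> Y n) x else x)"

definition psi_can :: "(nat \<Rightarrow> 'b set) \<Rightarrow> (nat \<Rightarrow> 'b \<Rightarrow> 'b) \<Rightarrow> ('b \<Rightarrow> 'a) \<Rightarrow> ('b \<Rightarrow> 'a)" where
  "psi_can Y \<phi> g = g \<circ> phi_tilde Y \<phi>"

definition psi_tilde :: "(nat \<Rightarrow> 'b::topological_space set) \<Rightarrow> (nat \<Rightarrow> 'b \<Rightarrow> 'b)
    \<Rightarrow> ('b \<Rightarrow> 'a::real_normed_vector) set \<Rightarrow> ('b \<Rightarrow> 'a) set" where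
  "psi_tilde Y \<phi> c = quot_map (psi_can Y \<phi> (SOME g. g \<in> c))"

definition radius :: "'b::metric_space set \<Rightarrow> ('b \<Rightarrow> 'b) \<Rightarrow> real" where
  "radius Y \<phi> = (SUP x\<in>Y. dist x (\<phi> x))"

definition D_f :: "(nat \<Rightarrow> 'b::metric_space set) \<Rightarrow> (nat \<Rightarrow> nat) \<Rightarrow> ('b \<Rightarrow> 'a::real_normed_vector) set" where
  "D_f Y f = {g \<in> Cb. \<forall>\<epsilon>>0. \<exists>n0. \<forall>n\<ge>n0. \<forall>x\<in>Y n. \<forall>y\<in>Y n.
                 dist x y < 1 / real (f n) \<longrightarrow> norm (g x - g y) < \<epsilon>}"

definition C_f :: "(nat \<Rightarrow> 'b::metric_space set) \<Rightarrow> (nat \<Rightarrow> nat) \<Rightarrow> ('b \<Rightarrow> 'a::real_normed_vector) set set" where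
  "C_f Y f = quot_map ` D_f Y f"

end

theory Submission
  imports Defs
begin

text \<open>For infinitely many n choose x_n in Y_n displaced by phi_n by more than n/(2 f(n)).
  On each such Y_n take the tent a (1 - L_n d(-, x_n))^+ of slope L_n = 2 f(n)/n, for a fixed
  a \<noteq> 0, and extend by Tietze: the Y_n are locally isolated, so their union is closed and the
  glued function g is continuous. Over distance 1/f(n) the tent changes by at most 2|a|/n, so the
  class of g lies in C_f, while g(x_n) = a and g(phi_n x_n) = 0. If psi_tilde fixed that class,
  g - g o phi_tilde would vanish at infinity, which fails on the Y_n avoiding a given compact set.\<close>

lemma disjoint_family_SOME_index:
  assumes "disjoint_family Y" "x \<in> Y n"
  shows "(SOME n. x \<in> Y n) = n"
proof -
  have "x \<in> Y (SOME n. x \<in> Y n)" using assms(2) by (rule someI)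
  with assms show ?thesis by (auto simp: disjoint_family_on_def)
qed

lemma locally_finite_compact_family_isolated:
  fixes Y :: "nat \<Rightarrow> 'b::metric_space set"
  assumes lc: "locally_compact_space (euclidean :: 'b topology)"
    and cY: "\<And>n. compact (Y n)"
    and fin: "\<And>K. compact K \<Longrightarrow> finite {n. Y n \<inter> K \<noteq> {}}"
  obtains e where "e > 0" "\<And>n. ball x e \<inter> Y n \<noteq> {} \<Longrightarrow> x \<in> Y n"
proof -
  have "\<exists>U. open U \<and> (\<exists>K. compact K \<and> x \<in> U \<and> U \<subseteq> K)"
    using lc by (simp add: locally_compact_space_def)
  then obtain U K where U: "open U" "compact K" "x \<in> U" "U \<subseteq> K" by blast
  define F where "F = (\<Union>n\<in>{n. Y n \<inter> K \<noteq> {} \<and> x \<notin> Y n}. Y n)"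
  have "finite {n. Y n \<inter> K \<noteq> {} \<and> x \<notin> Y n}"
    by (rule finite_subset[OF _ fin[OF U(2)]]) auto
  then have "closed F"
    unfolding F_def using cY by (intro compact_imp_closed compact_UN) auto
  moreover have "x \<notin> F" unfolding F_def by auto
  ultimately obtain e1 where e1: "e1 > 0" "ball x e1 \<subseteq> - F"
    by (metis open_Compl open_contains_ball ComplI)
  obtain e2 where e2: "e2 > 0" "ball x e2 \<subseteq> U"
    using U open_contains_ball by blast
  show thesis
  proof
    show "min e1 e2 > 0" using e1 e2 by simp
    fix n assume "ball x (min e1 e2) \<inter> Y n \<noteq> {}"
    then obtain y where y: "y \<in> ball x e1" "y \<in> ball x e2" "y \<in> Y n" by auto
    then have "y \<in> K" using e2 U by blast
    show "x \<in> Y n"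
    proof (rule ccontr)
      assume "x \<notin> Y n"
      with y(3) \<open>y \<in> K\<close> have "y \<in> F" unfolding F_def by blast
      with y(1) e1(2) show False by blast
    qed
  qed
qed

lemma closed_Union_locally_finite_compact_family:
  fixes Y :: "nat \<Rightarrow> 'b::metric_space set"
  assumes "locally_compact_space (euclidean :: 'b topology)"
    and "\<And>n. compact (Y n)"
    and "\<And>K. compact K \<Longrightarrow> finite {n. Y n \<inter> K \<noteq> {}}"
  shows "closed (\<Union>n. Y n)"
  unfolding closed_def open_contains_ball
proof
  fix x assume "x \<in> - (\<Union>n. Y n)"
  moreover obtain e where "e > 0" "\<And>n. ball x e \<inter> Y n \<noteq> {} \<Longrightarrow> x \<in> Y n"
    using locally_finite_compact_family_isolated assms by blast
  ultimately show "\<exists>e>0. ball x e \<subseteq> - (\<Union>n. Y n)" by blast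
qed

lemma continuous_on_glue_locally_finite_compact_family:
  fixes Y :: "nat \<Rightarrow> 'b::metric_space set" and b :: "nat \<Rightarrow> 'b \<Rightarrow> 'c::topological_space"
  assumes lc: "locally_compact_space (euclidean :: 'b topology)"
    and cY: "\<And>n. compact (Y n)"
    and disj: "disjoint_family Y"
    and fin: "\<And>K. compact K \<Longrightarrow> finite {n. Y n \<inter> K \<noteq> {}}"
    and cont: "\<And>n. continuous_on (Y n) (b n)"
    and u: "\<And>n x. x \<in> Y n \<Longrightarrow> u x = b n x"
  shows "continuous_on (\<Union>n. Y n) u"
  unfolding continuous_on_eq_continuous_within
proof
  fix x assume "x \<in> (\<Union>n. Y n)"
  then obtain m where xm: "x \<in> Y m" by blast
  obtain e where e: "e > 0" "\<And>n. ball x e \<inter> Y n \<noteq> {} \<Longrightarrow> x \<in> Y n"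
    using locally_finite_compact_family_isolated lc cY fin by blast
  have "(\<Union>n. Y n) \<inter> ball x e = Y m \<inter> ball x e"
  proof safe
    fix y n assume "y \<in> Y n" "y \<in> ball x e"
    then have "x \<in> Y n" using e(2) by blast
    with xm disj have "n = m" by (auto simp: disjoint_family_on_def)
    then show "y \<in> Y m" using \<open>y \<in> Y n\<close> by simp
  qed auto
  then have "at x within (\<Union>n. Y n) = at x within Y m"
    by (intro at_within_nhd[of _ "ball x e"]) (use e(1) in auto)
  moreover have "continuous_on (Y m) u"
    using cont[of m] u[of _ m] by (simp cong: continuous_on_cong)
  ultimately show "continuous (at x within (\<Union>n. Y n)) u"
    using xm by (simp add: continuous_on_eq_continuous_within)
qed

lemma continuous_extension_of_piecesE:
  fixes Y :: "nat \<Rightarrow> 'b::metric_space set" and b :: "nat \<Rightarrow> 'b \<Rightarrow> real"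
  assumes lc: "locally_compact_space (euclidean :: 'b topology)"
    and cY: "\<And>n. compact (Y n)"
    and disj: "disjoint_family Y"
    and fin: "\<And>K. compact K \<Longrightarrow> finite {n. Y n \<inter> K \<noteq> {}}"
    and cont: "\<And>n. continuous_on (Y n) (b n)"
    and range: "\<And>n x. x \<in> Y n \<Longrightarrow> b n x \<in> {lo..hi}" and "lo \<le> hi"
  obtains v where "continuous_on UNIV v" "\<And>x. v x \<in> {lo..hi}"
    "\<And>n x. x \<in> Y n \<Longrightarrow> v x = b n x"
proof -
  define u where "u x = b (SOME n. x \<in> Y n) x" for x
  have u: "u x = b n x" if "x \<in> Y n" for n x
    unfolding u_def disjoint_family_SOME_index[OF disj that] ..
  have "continuous_on (\<Union>n. Y n) u"
    by (rule continuous_on_glue_locally_finite_compact_family[OF lc cY disj fin cont u])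
  then have "continuous_map (subtopology euclidean (\<Union>n. Y n)) euclideanreal u"
    by (simp only: continuous_map_iff_continuous)
  moreover have "closedin euclidean (\<Union>n. Y n)"
    using closed_Union_locally_finite_compact_family[OF lc cY fin] by (simp only: closed_closedin)
  moreover have "u ` (\<Union>n. Y n) \<subseteq> {lo..hi}" using range u by (auto simp: image_subset_iff)
  ultimately obtain v where v: "continuous_map euclidean euclideanreal v"
      "\<And>x. x \<in> (\<Union>n. Y n) \<Longrightarrow> v x = u x" "v ` topspace euclidean \<subseteq> {lo..hi}"
    using Tietze_extension_closed_real_interval[OF metrizable_imp_normal_space[OF metrizable_space_euclidean]
      _ _ _ \<open>lo \<le> hi\<close>] by blast
  show thesis
  proof (rule that)
    show "continuous_on UNIV v" using v(1) by (simp only: continuous_map_iff_continuous2)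
    show "v x \<in> {lo..hi}" for x using v(3) by (auto simp: image_subset_iff)
    show "v x = b n x" if "x \<in> Y n" for n x using v(2)[of x] u[OF that] that by auto
  qed
qed

lemma tent_lipschitz:
  fixes c x y :: "'b::metric_space"
  assumes "L \<ge> 0"
  shows "\<bar>max 0 (1 - L * dist x c) - max 0 (1 - L * dist y c)\<bar> \<le> L * dist x y"
proof -
  have "\<bar>dist x c - dist y c\<bar> \<le> dist x y"
    using dist_triangle[of x c y] dist_triangle[of y c x] dist_commute[of x y] by linarith
  moreover have "\<bar>(1 - L * dist x c) - (1 - L * dist y c)\<bar> = L * \<bar>dist x c - dist y c\<bar>"
    using assms by (simp add: abs_mult flip: right_diff_distrib abs_minus_commute)
  ultimately have "\<bar>(1 - L * dist x c) - (1 - L * dist y c)\<bar> \<le> L * dist x y"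
    using assms by (simp add: mult_left_mono)
  then show ?thesis by linarith
qed

lemma D_f_if_lipschitz_on_pieces:
  fixes g :: "'b::metric_space \<Rightarrow> 'a::real_normed_vector"
  assumes "g \<in> Cb"
    and lip: "\<And>n x y. x \<in> Y n \<Longrightarrow> y \<in> Y n \<Longrightarrow> norm (g x - g y) \<le> L n * dist x y"
    and "\<And>n. L n \<ge> 0"
    and lim: "(\<lambda>n. L n / real (f n)) \<longlonglongrightarrow> 0"
  shows "g \<in> D_f Y f"
  unfolding D_f_def mem_Collect_eq
proof (intro conjI allI impI \<open>g \<in> Cb\<close>)
  fix \<epsilon> :: real assume "\<epsilon> > 0"
  then obtain n0 where n0: "\<And>n. n \<ge> n0 \<Longrightarrow> L n / real (f n) < \<epsilon>"
    using order_tendstoD(2)[OF lim] by (auto simp: eventually_sequentially)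
  have "norm (g x - g y) < \<epsilon>"
    if "n \<ge> n0" "x \<in> Y n" "y \<in> Y n" "dist x y < 1 / real (f n)" for n x y
  proof -
    have "norm (g x - g y) \<le> L n * dist x y" by (rule lip[OF that(2,3)])
    also have "\<dots> \<le> L n * (1 / real (f n))"
      using that(4) \<open>L n \<ge> 0\<close> by (intro mult_left_mono) auto
    also have "\<dots> < \<epsilon>" using n0[OF that(1)] by simp
    finally show ?thesis .
  qed
  then show "\<exists>n0. \<forall>n\<ge>n0. \<forall>x\<in>Y n. \<forall>y\<in>Y n. dist x y < 1 / real (f n) \<longrightarrow> norm (g x - g y) < \<epsilon>"
    by (intro exI[of _ n0]) simp
qed

lemma radius_ge_witnessE:
  assumes "Y \<noteq> {}" "0 < r" "r \<le> radius Y \<phi>"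
  obtains x where "x \<in> Y" "r < 2 * dist x (\<phi> x)"
proof -
  have "r / 2 < Sup ((\<lambda>x. dist x (\<phi> x)) ` Y)" using assms(2,3) unfolding radius_def by linarith
  then obtain d where "d \<in> (\<lambda>x. dist x (\<phi> x)) ` Y" "r / 2 < d"
    by (rule less_cSupE) (use assms(1) in simp)
  then show thesis using that by auto
qed

lemma quot_map_self:
  fixes g :: "'b::topological_space \<Rightarrow> 'a::real_normed_vector"
  assumes "g \<in> Cb"
  shows "g \<in> quot_map g"
proof -
  have "(\<lambda>_. 0) \<in> (C0 :: ('b \<Rightarrow> 'a) set)"
    unfolding C0_def by (auto intro: exI[of _ "{}"])
  with assms show ?thesis
    unfolding quot_map_def by (simp add: fun_diff_def)
qed

lemma C0_smallE:
  assumes "h \<in> C0" "\<epsilon> > 0"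
  obtains K where "compact K" "\<And>x. x \<notin> K \<Longrightarrow> norm (h x) < \<epsilon>"
  using assms unfolding C0_def by blast

lemma psi_tilde_fixed_imp_displacement_small:
  fixes g :: "'b::topological_space \<Rightarrow> 'a::real_normed_vector"
  assumes "g \<in> Cb" "psi_tilde Y \<phi> (quot_map g) = quot_map g" "\<epsilon> > 0"
  obtains K where "compact K"
    "\<And>x. x \<notin> K \<Longrightarrow> phi_tilde Y \<phi> x \<notin> K \<Longrightarrow> norm (g x - g (phi_tilde Y \<phi> x)) < \<epsilon>"
proof -
  define p where "p = phi_tilde Y \<phi>"
  define h where "h = (SOME h. h \<in> quot_map g)"
  have "h \<in> quot_map g"
    unfolding h_def using quot_map_self[OF \<open>g \<in> Cb\<close>] by (rule someI[where P = "\<lambda>h. h \<in> quot_map g"])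
  then have hg: "h - g \<in> C0" unfolding quot_map_def by simp
  have "g \<in> quot_map (h \<circ> p)"
    using assms(2) quot_map_self[OF \<open>g \<in> Cb\<close>]
    unfolding psi_tilde_def psi_can_def h_def p_def by simp
  then have ghp: "g - (h \<circ> p) \<in> C0" unfolding quot_map_def by simp
  obtain K1 where K1: "compact K1" "\<And>x. x \<notin> K1 \<Longrightarrow> norm (g x - h (p x)) < \<epsilon> / 2"
    using C0_smallE[OF ghp, of "\<epsilon> / 2"] \<open>\<epsilon> > 0\<close> by auto
  obtain K2 where K2: "compact K2" "\<And>x. x \<notin> K2 \<Longrightarrow> norm (h x - g x) < \<epsilon> / 2"
    using C0_smallE[OF hg, of "\<epsilon> / 2"] \<open>\<epsilon> > 0\<close> by auto
  \<comment> \<open>g - g o p = (g - h o p) + (h - g) o p, with both summands small off K1 and off the preimage of K2 under p\<close>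
  show thesis
  proof (rule that[of "K1 \<union> K2"])
    show "compact (K1 \<union> K2)" using K1(1) K2(1) by (rule compact_Un)
    fix x assume "x \<notin> K1 \<union> K2" "phi_tilde Y \<phi> x \<notin> K1 \<union> K2"
    then have "norm (g x - h (p x)) + norm (h (p x) - g (p x)) < \<epsilon>"
      using K1(2)[of x] K2(2)[of "p x"] unfolding p_def by simp
    then show "norm (g x - g (phi_tilde Y \<phi> x)) < \<epsilon>"
      using norm_triangle_ineq[of "g x - h (p x)" "h (p x) - g (p x)"] unfolding p_def by simp
  qed
qed

lemma phi_tilde_eq:
  assumes "disjoint_family Y" "x \<in> Y n"
  shows "phi_tilde Y \<phi> x = \<phi> n x"
  using assms(2) unfolding phi_tilde_def disjoint_family_SOME_index[OF assms] by auto

lemma homeo_bd_mapsto: "homeo_bd Y \<phi> \<Longrightarrow> x \<in> Y \<Longrightarrow> \<phi> x \<in> Y"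
  unfolding homeo_bd_def homeomorphism_def by blast

lemma D_f_separating_functionE:
  fixes Y :: "nat \<Rightarrow> 'b::metric_space set" and a :: "'a::real_normed_vector"
  assumes lc: "locally_compact_space (euclidean :: 'b topology)"
    and cY: "\<And>n. compact (Y n)"
    and disj: "disjoint_family Y"
    and fin: "\<And>K. compact K \<Longrightarrow> finite {n. Y n \<inter> K \<noteq> {}}"
    and fpos: "\<And>n. f n > 0"
    and "0 \<notin> S"
    and sep: "\<And>n. n \<in> S \<Longrightarrow> x n \<in> Y n \<and> y n \<in> Y n \<and> real n / real (f n) < 2 * dist (x n) (y n)"
  obtains g where "g \<in> D_f Y f" "\<And>n. n \<in> S \<Longrightarrow> g (x n) = a \<and> g (y n) = 0"
proof -
  define L where "L n = 2 * real (f n) / real n" for n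
  have L0: "L n \<ge> 0" for n unfolding L_def by simp
  define b where "b n z = (if n \<in> S then max 0 (1 - L n * dist z (x n)) else 0)" for n z
  have b_lip: "\<bar>b n z - b n w\<bar> \<le> L n * dist z w" for n z w
    unfolding b_def using tent_lipschitz[OF L0[of n], of z "x n" w] L0[of n] by simp
  have b_cont: "continuous_on (Y n) (b n)" for n
    unfolding b_def by (cases "n \<in> S") (simp_all add: continuous_on_max continuous_on_diff
      continuous_on_mult continuous_on_dist continuous_on_const continuous_on_id)
  have b_range: "b n z \<in> {0..1}" if "z \<in> Y n" for n z unfolding b_def using L0[of n] by auto
  obtain v
    where v: "continuous_on UNIV v" "\<And>z. v z \<in> {0..1}" "\<And>n z. z \<in> Y n \<Longrightarrow> v z = b n z"
    using continuous_extension_of_piecesE[OF lc cY disj fin b_cont b_range zero_le_one] by blast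
  define g where "g z = v z *\<^sub>R a" for z
  have "continuous_on UNIV g" unfolding g_def by (intro continuous_on_scaleR v(1) continuous_on_const)
  moreover have "norm (g z) \<le> norm a" for z using v(2)[of z] by (simp add: g_def mult_left_le_one_le)
  ultimately have "g \<in> Cb" unfolding Cb_def bounded_iff by auto
  moreover have "norm (g z - g w) \<le> (L n * norm a) * dist z w" if "z \<in> Y n" "w \<in> Y n" for n z w
    using mult_right_mono[OF b_lip norm_ge_zero, of n z w a]
    unfolding g_def v(3)[OF that(1)] v(3)[OF that(2)]
    by (simp add: algebra_simps flip: scaleR_diff_left)
  moreover have "(\<lambda>n. L n * norm a / real (f n)) = (\<lambda>n. 2 * norm a / real n)"
  proof
    fix n show "L n * norm a / real (f n) = 2 * norm a / real n"
      unfolding L_def using fpos[of n] by simp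
  qed
  then have "(\<lambda>n. L n * norm a / real (f n)) \<longlonglongrightarrow> 0"
    using lim_const_over_n[of "2 * norm a"] by simp
  ultimately have "g \<in> D_f Y f" using L0 by (intro D_f_if_lipschitz_on_pieces) auto
  moreover have "g (x n) = a \<and> g (y n) = 0" if "n \<in> S" for n
  proof -
    have "n > 0" using that \<open>0 \<notin> S\<close> by (cases n) auto
    then have "L n * (real n / real (f n)) = 2" unfolding L_def using fpos[of n] by simp
    moreover have "L n * (real n / real (f n)) < L n * (2 * dist (y n) (x n))"
      using sep[OF that] \<open>n > 0\<close> fpos[of n]
      by (intro mult_strict_left_mono) (auto simp: L_def dist_commute)
    ultimately have "1 < L n * dist (y n) (x n)" by linarith
    then have "b n (x n) = 1" "b n (y n) = 0" unfolding b_def using that by simp_all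
    then show ?thesis using sep[OF that] v(3)[of "x n" n] v(3)[of "y n" n] unfolding g_def by simp
  qed
  ultimately show thesis by (rule that)
qed

theorem lemma2p4:
  fixes Y :: "nat \<Rightarrow> 'b::metric_space set"
    and \<phi> :: "nat \<Rightarrow> 'b \<Rightarrow> 'b"
    and f :: "nat \<Rightarrow> nat"
  assumes "locally_compact_space (euclidean :: 'b topology)"
    and "\<not> compact (UNIV :: 'b set)"
    and "completely_metrizable_space (euclidean :: 'b topology)"
    and "separable_space (euclidean :: 'b topology)"
    and "\<exists>a::'a::cstar_algebra. a \<noteq> 0"
    and "\<And>n. infinite (Y n)"
    and "\<And>n. compact (Y n)"
    and "disjoint_family Y"
    and "\<And>K. compact K \<Longrightarrow> finite {n. Y n \<inter> K \<noteq> {}}"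
    and "\<And>n. homeo_bd (Y n) (\<phi> n)"
    and "\<And>n. f n > 0"
    and "infinite {n. radius (Y n) (\<phi> n) \<ge> real n / real (f n)}"
  shows "\<exists>c \<in> (C_f Y f :: ('b \<Rightarrow> 'a) set set). psi_tilde Y \<phi> c \<noteq> c"
proof -
  obtain a :: 'a where "a \<noteq> 0" using assms(5) by blast
  define S where "S = {n. radius (Y n) (\<phi> n) \<ge> real n / real (f n)} - {0}"
  have "0 \<notin> S" unfolding S_def by simp
  have "\<forall>n\<in>S. \<exists>x. x \<in> Y n \<and> \<phi> n x \<in> Y n \<and> real n / real (f n) < 2 * dist x (\<phi> n x)"
  proof
    fix n assume "n \<in> S"
    then have "0 < real n / real (f n)" "real n / real (f n) \<le> radius (Y n) (\<phi> n)"
      using assms(11)[of n] unfolding S_def by auto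
    moreover have "Y n \<noteq> {}" using assms(6)[of n] by auto
    ultimately obtain z where "z \<in> Y n" "real n / real (f n) < 2 * dist z (\<phi> n z)"
      using radius_ge_witnessE by blast
    then show "\<exists>x. x \<in> Y n \<and> \<phi> n x \<in> Y n \<and> real n / real (f n) < 2 * dist x (\<phi> n x)"
      using homeo_bd_mapsto[OF assms(10)] by blast
  qed
  then obtain x where x: "\<forall>n\<in>S.
      x n \<in> Y n \<and> \<phi> n (x n) \<in> Y n \<and> real n / real (f n) < 2 * dist (x n) (\<phi> n (x n))"
    by (rule bchoice[THEN exE])
  obtain g :: "'b \<Rightarrow> 'a"
    where g: "g \<in> D_f Y f" "\<And>n. n \<in> S \<Longrightarrow> g (x n) = a \<and> g (\<phi> n (x n)) = 0"
    using D_f_separating_functionE[OF assms(1,7,8,9,11) \<open>0 \<notin> S\<close> x[rule_format]] by blast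
  have "g \<in> Cb" using g(1) unfolding D_f_def by simp
  have "infinite S" using assms(12) unfolding S_def by simp
  have "psi_tilde Y \<phi> (quot_map g) \<noteq> quot_map g"
  proof
    assume fixed: "psi_tilde Y \<phi> (quot_map g) = quot_map g"
    obtain K where K: "compact K"
      "\<And>z. z \<notin> K \<Longrightarrow> phi_tilde Y \<phi> z \<notin> K \<Longrightarrow> norm (g z - g (phi_tilde Y \<phi> z)) < norm a"
      by (rule psi_tilde_fixed_imp_displacement_small[OF \<open>g \<in> Cb\<close> fixed]) (use \<open>a \<noteq> 0\<close> in auto)
    have "infinite (S - {n. Y n \<inter> K \<noteq> {}})"
      using assms(9)[OF K(1)] \<open>infinite S\<close> by (rule Diff_infinite_finite)
    then obtain n where n: "n \<in> S" "Y n \<inter> K = {}" using infinite_imp_nonempty by blast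
    then have xn: "x n \<in> Y n" "\<phi> n (x n) \<in> Y n" using x by auto
    then have "phi_tilde Y \<phi> (x n) = \<phi> n (x n)" using phi_tilde_eq[OF assms(8)] by blast
    then have "norm (g (x n) - g (\<phi> n (x n))) < norm a" using K(2)[of "x n"] xn n(2) by auto
    then show False using g(2)[OF n(1)] by simp
  qed
  then show ?thesis using g(1) unfolding C_f_def by blast
qed

end
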